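(* Let $a$ be a complex number which is not a non-zero integer. Then \[ \sum_{n=1}^{\infty}\frac{(-1)^{n-1}}{n^2-a^2}=\frac14\sum_{n=1}^{\infty}\frac{(-1)^{n-1}(10n^2-3n-a^2)}{n(2n-1)(n^2-a^2)\binom{2n}{n}\prod_{j=1}^{n}\bigl(1-a^2/(n+j)^2\bigr)}. \] In particular, \[ \zeta(2)=\frac12\sum_{n=1}^{\infty}\frac{(-1)^{n-1}(10n-3)}{n^2(2n-1)\binom{2n}{n}}. \] *)

theory Defs
  imports "HOL-Analysis.Analysis"
begin

end

theory Submission
  imports Defs
begin

text \<open>
  The proof is a Markov--WZ acceleration. With
  \<open>D(n,k) = \<Prod>i\<le>n. ((k+i+1)\<^sup>2 - a\<^sup>2)\<close> the functions
  \<open>F(n,k) = (-1)\<^sup>k n! (n+k)! (2k+n+2) / (2 (k+1)! D(n,k))\<close> and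
  \<open>G(n,k) = (-1)\<^sup>k n! (n+k)! / (2 k! D(n,k))\<close> form a WZ pair,
  \<open>F(n+1,k) - F(n,k) = G(n,k+1) - G(n,k)\<close>, and \<open>F(0,k)\<close> is the \<open>k\<close>-th term of the
  left-hand series. Summing the pair relation over the triangle \<open>n < K, n < k \<le> K\<close>
  turns \<open>\<Sum>k\<le>K. F(0,k)\<close> into the partial sums of \<open>\<Sum>n. F(n,n) + G(n,n+1)\<close> up to the
  boundary terms \<open>F(K,K)\<close> and \<open>\<Sum>n<K. G(n,K+1)\<close>; once \<open>K\<^sup>2 \<ge> 3|a|\<^sup>2\<close> these are
  bounded by \<open>(3/4)\<^sup>K\<close> and \<open>1/K\<close>, because \<open>n! k! / (n+k)! \<le> 2\<^sup>-\<^sup>n\<close> for \<open>n \<le> k\<close>.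
  Finally \<open>F(n,n) + G(n,n+1)\<close> is a quarter of the \<open>(n+1)\<close>-st term of the right-hand
  series. At \<open>a = 0\<close> the left-hand side is \<open>\<Sum> (-1)\<^sup>m/(m+1)\<^sup>2 = \<zeta>(2)/2\<close>.
\<close>

definition wz_denom :: "'a::field_char_0 \<Rightarrow> nat \<Rightarrow> nat \<Rightarrow> 'a" where
  "wz_denom a n k = (\<Prod>i\<le>n. of_nat (k + i + 1) ^ 2 - a ^ 2)"

text \<open>Where \<open>wz_denom a n k\<close> vanishes the quotients below take the junk value 0; the
  locale \<open>avoids_squares\<close> excludes this.\<close>

definition wz_F :: "'a::field_char_0 \<Rightarrow> nat \<Rightarrow> nat \<Rightarrow> 'a" where
  "wz_F a n k = (-1) ^ k * fact n * fact (n + k) * of_nat (2 * k + n + 2)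
                / (2 * fact (k + 1) * wz_denom a n k)"

definition wz_G :: "'a::field_char_0 \<Rightarrow> nat \<Rightarrow> nat \<Rightarrow> 'a" where
  "wz_G a n k = (-1) ^ k * fact n * fact (n + k) / (2 * fact k * wz_denom a n k)"

definition accel_summand :: "'a::field_char_0 \<Rightarrow> nat \<Rightarrow> 'a" where
  "accel_summand a n = (-1) ^ (n - 1) * (10 * of_nat n ^ 2 - 3 * of_nat n - a ^ 2) /
     (of_nat n * (2 * of_nat n - 1) * (of_nat n ^ 2 - a ^ 2) * of_nat ((2 * n) choose n)
      * (\<Prod>j = 1..n. 1 - a ^ 2 / of_nat (n + j) ^ 2))"

lemma fact_mult_prod_shift:
  "fact k * (\<Prod>i<m. of_nat (k + i + 1)) = (fact (k + m) :: 'a::{comm_semiring_1,semiring_char_0})"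
proof (induction m)
  case (Suc m)
  have "fact k * (\<Prod>i<Suc m. of_nat (k + i + 1))
      = fact k * (\<Prod>i<m. of_nat (k + i + 1)) * (of_nat (k + m + 1) :: 'a)"
    by (simp only: prod.lessThan_Suc mult.assoc)
  also have "\<dots> = fact (k + Suc m)"
    by (simp only: Suc.IH) (simp add: mult.commute)
  finally show ?case .
qed simp

lemma two_pow_mult_fact_le: "n \<le> m \<Longrightarrow> 2 ^ n * fact n * fact m \<le> (fact (n + m) :: nat)"
proof (induction n)
  case (Suc n)
  have "2 ^ Suc n * fact (Suc n) * fact m = (2 * (n + 1)) * (2 ^ n * fact n * fact m)"
    by (simp add: algebra_simps)
  also have "\<dots> \<le> Suc (n + m) * fact (n + m)"
    using Suc by (intro mult_mono) auto
  finally show ?case by simp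
qed simp

lemma fact_mult_fact_div_le:
  assumes "n \<le> m"
  shows "fact n * fact m / fact (n + m) \<le> (1 / 2 :: real) ^ n"
  using of_nat_mono[OF two_pow_mult_fact_le[OF assms], where 'a=real]
  by (simp add: field_simps power_divide)

lemma prod_one_minus_square_ratio:
  fixes a :: "'a::field_char_0"
  shows "(\<Prod>j = 1..n. 1 - a ^ 2 / of_nat (n + j) ^ 2)
     = (\<Prod>j = 1..n. of_nat (n + j) ^ 2 - a ^ 2) / (fact (2 * n) / fact n) ^ 2"
proof -
  have "fact n * (\<Prod>j = 1..n. of_nat (n + j)) = (fact (2 * n) :: 'a)"
    unfolding mult_2 fact_mult_prod_shift[symmetric] by (simp add: prod.atLeast1_atMost_eq ac_simps)
  then have prod_eq: "(\<Prod>j = 1..n. of_nat (n + j) :: 'a) = fact (2 * n) / fact n"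
    by (simp add: field_simps)
  have "(\<Prod>j = 1..n. 1 - a ^ 2 / of_nat (n + j) ^ 2)
      = (\<Prod>j = 1..n. (of_nat (n + j) ^ 2 - a ^ 2) / of_nat (n + j) ^ 2)"
    by (rule prod.cong) (simp_all add: field_simps del: of_nat_add)
  also have "\<dots> = (\<Prod>j = 1..n. of_nat (n + j) ^ 2 - a ^ 2) / (\<Prod>j = 1..n. of_nat (n + j)) ^ 2"
    by (simp only: prod_dividef prod_power_distrib)
  finally show ?thesis unfolding prod_eq .
qed

lemma wz_partial_sum:
  fixes F G :: "nat \<Rightarrow> nat \<Rightarrow> 'a::ab_group_add"
  assumes pair: "\<And>n k. F (Suc n) k - F n k = G n (Suc k) - G n k"
  shows "(\<Sum>k\<le>K. F 0 k) = F K K + (\<Sum>n<K. F n n + G n (Suc n) - G n (Suc K))"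
proof -
  have "(\<Sum>k\<le>K. F 0 k) = (\<Sum>k=N..K. F N k) + (\<Sum>n<N. F n n + G n (Suc n) - G n (Suc K))"
    if "N \<le> K" for N
    using that
  proof (induction N)
    case 0
    show ?case by (simp add: atMost_atLeast0)
  next
    case (Suc N)
    have "(\<Sum>k = Suc N..K. F (Suc N) k) - (\<Sum>k = Suc N..K. F N k)
        = (\<Sum>k = Suc N..K. G N (Suc k) - G N k)"
      by (simp add: pair sum_subtractf[symmetric])
    also have "\<dots> = G N (Suc K) - G N (Suc N)"
      using Suc.prems by (intro sum_Suc_diff) simp
    finally show ?case
      using Suc by (simp add: sum.atLeast_Suc_atMost algebra_simps)
  qed
  from this[of K] show ?thesis by simp
qed

lemma wz_sums:
  fixes F G :: "nat \<Rightarrow> nat \<Rightarrow> 'a::real_normed_vector"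
  assumes pair: "\<And>n k. F (Suc n) k - F n k = G n (Suc k) - G n k"
    and "summable (F 0)"
    and "(\<lambda>K. F K K) \<longlonglongrightarrow> 0"
    and "(\<lambda>K. \<Sum>n<K. G n (Suc K)) \<longlonglongrightarrow> 0"
  shows "(\<lambda>n. F n n + G n (Suc n)) sums (\<Sum>k. F 0 k)"
proof -
  have "(\<lambda>K. (\<Sum>k\<le>K. F 0 k) - F K K + (\<Sum>n<K. G n (Suc K))) \<longlonglongrightarrow> (\<Sum>k. F 0 k) - 0 + 0"
    using assms(2-4) by (intro tendsto_add tendsto_diff summable_LIMSEQ')
  moreover have "(\<Sum>k\<le>K. F 0 k) - F K K + (\<Sum>n<K. G n (Suc K)) = (\<Sum>n<K. F n n + G n (Suc n))" for K
    unfolding wz_partial_sum[of F G, OF pair] by (simp add: sum_subtractf)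
  ultimately show ?thesis
    unfolding sums_def by simp
qed

lemma wz_denom_Suc_left: "wz_denom a (Suc n) k = wz_denom a n k * (of_nat (k + n + 2) ^ 2 - a ^ 2)"
  unfolding wz_denom_def by (simp add: algebra_simps)

lemma wz_denom_Suc_right:
  "wz_denom a (Suc n) k = (of_nat (k + 1) ^ 2 - a ^ 2) * wz_denom a n (Suc k)"
  unfolding wz_denom_def by (subst prod.atMost_Suc_shift) (simp add: algebra_simps)

lemma wz_denom_diagonal: "wz_denom a n (Suc n) = (\<Prod>j = 1..Suc n. of_nat (Suc n + j) ^ 2 - a ^ 2)"
  unfolding wz_denom_def One_nat_def prod.atLeast1_atMost_eq lessThan_Suc_atMost
  by (intro prod.cong) simp_all

lemma wz_F_eq_wz_G: "wz_F a n k = wz_G a n k * of_nat (2 * k + n + 2) / of_nat (k + 1)"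
  unfolding wz_F_def wz_G_def by (simp add: field_simps del: of_nat_Suc)

locale avoids_squares =
  fixes a :: "'a::field_char_0"
  assumes square_ne: "0 < j \<Longrightarrow> of_nat j ^ 2 \<noteq> a ^ 2"
begin

lemma wz_denom_nonzero: "wz_denom a n k \<noteq> 0"
proof -
  have "of_nat (k + i + 1) ^ 2 - a ^ 2 \<noteq> 0" for i
    using square_ne[of "k + i + 1"] by simp
  then show ?thesis by (simp add: wz_denom_def)
qed

lemma wz_pair: "wz_F a (Suc n) k - wz_F a n k = wz_G a n (Suc k) - wz_G a n k"
proof -
  define D where "D = wz_denom a n k"
  define X where "X = of_nat (k + 1) ^ 2 - a ^ 2"
  define Y where "Y = of_nat (k + n + 2) ^ 2 - a ^ 2"
  define K where "K = (of_nat (k + 1) :: 'a)"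
  define c where "c = (-1) ^ k * fact n * fact (n + k) / (2 * K * fact k * D * Y)"
  have nonzero: "D \<noteq> 0" "X \<noteq> 0" "Y \<noteq> 0" "K \<noteq> 0"
    unfolding D_def X_def Y_def K_def
    by (simp_all add: wz_denom_nonzero square_ne del: of_nat_add of_nat_Suc)
  have fact_K: "fact (k + 1) = K * fact k" "fact (Suc k) = K * fact k"
    unfolding K_def by (simp_all del: of_nat_Suc)
  have D_Suc_left: "wz_denom a (Suc n) k = D * Y"
    unfolding D_def Y_def by (rule wz_denom_Suc_left)
  have D_Suc_right: "wz_denom a n (Suc k) = D * Y / X"
    using wz_denom_Suc_right[of a n k] nonzero(2) unfolding D_Suc_left X_def by (simp add: field_simps)
  have F_Suc: "wz_F a (Suc n) k = c * (of_nat (n + 1) * of_nat (n + k + 1) * of_nat (2 * k + n + 3))"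
    using nonzero unfolding wz_F_def c_def D_Suc_left fact_K by (simp add: field_simps)
  have F: "wz_F a n k = c * (of_nat (2 * k + n + 2) * Y)"
    using nonzero unfolding wz_F_def c_def D_def[symmetric] fact_K by (simp add: field_simps)
  have G_Suc: "wz_G a n (Suc k) = - c * (of_nat (n + k + 1) * X)"
    using nonzero unfolding wz_G_def c_def D_Suc_right fact_K by (simp add: field_simps)
  have G: "wz_G a n k = c * (K * Y)"
    using nonzero unfolding wz_G_def c_def D_def[symmetric] by (simp add: field_simps)
  have "wz_F a (Suc n) k - wz_F a n k
      = c * (of_nat (n + 1) * of_nat (n + k + 1) * of_nat (2 * k + n + 3) - of_nat (2 * k + n + 2) * Y)"
    unfolding F_Suc F by (simp only: right_diff_distrib)
  also have "\<dots> = c * (- of_nat (n + k + 1) * X - K * Y)"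
    unfolding X_def Y_def K_def by (simp add: power2_eq_square algebra_simps)
  also have "\<dots> = wz_G a n (Suc k) - wz_G a n k"
    unfolding G_Suc G by (simp add: algebra_simps)
  finally show ?thesis .
qed

lemma wz_F_zero: "wz_F a 0 k = (-1) ^ k / (of_nat (Suc k) ^ 2 - a ^ 2)"
proof -
  define K where "K = (of_nat (Suc k) :: 'a)"
  have nonzero: "K \<noteq> 0" "K ^ 2 - a ^ 2 \<noteq> 0"
    unfolding K_def by (simp_all add: square_ne del: of_nat_Suc)
  have "wz_denom a 0 k = K ^ 2 - a ^ 2"
    unfolding wz_denom_def K_def by simp
  moreover have "fact (k + 1) = K * fact k"
    unfolding K_def by (simp del: of_nat_Suc)
  moreover have "of_nat (2 * k + 0 + 2) = 2 * K"
    unfolding K_def by simp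
  ultimately show ?thesis
    using nonzero unfolding wz_F_def K_def[symmetric] by (simp add: field_simps)
qed

lemma accel_summand_Suc:
  "accel_summand a (Suc n)
     = 2 * (-1) ^ n * fact (2 * n) * (10 * of_nat (Suc n) ^ 2 - 3 * of_nat (Suc n) - a ^ 2)
       / ((of_nat (Suc n) ^ 2 - a ^ 2) * wz_denom a n (Suc n))"
proof -
  define N where "N = (of_nat (Suc n) :: 'a)"
  define M where "M = (of_nat (2 * n + 1) :: 'a)"
  define X where "X = N ^ 2 - a ^ 2"
  define P where "P = wz_denom a n (Suc n)"
  define Q where "Q = 10 * N ^ 2 - 3 * N - a ^ 2"
  define F1 where "F1 = (fact (Suc n) :: 'a)"
  define F2 where "F2 = (fact (2 * Suc n) :: 'a)"
  have M: "2 * N - 1 = M"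
    unfolding N_def M_def by simp
  have nonzero: "N \<noteq> 0" "M \<noteq> 0" "X \<noteq> 0" "P \<noteq> 0" "F1 \<noteq> 0" "F2 \<noteq> 0"
    unfolding N_def M_def X_def P_def F1_def F2_def
    by (simp_all add: wz_denom_nonzero square_ne del: of_nat_add of_nat_Suc fact_Suc)
  have "(of_nat ((2 * Suc n) choose Suc n) :: 'a) = F2 / (F1 * fact (2 * Suc n - Suc n))"
    unfolding F1_def F2_def by (rule binomial_fact) simp
  also have "2 * Suc n - Suc n = Suc n" by simp
  finally have binom: "(of_nat ((2 * Suc n) choose Suc n) :: 'a) = F2 / F1 ^ 2"
    by (simp only: F1_def[symmetric] power2_eq_square)
  have squares: "F2 / F1 ^ 2 * (P / (F2 / F1) ^ 2) = P / F2"
    using nonzero(5,6) by (simp add: power_divide power2_eq_square)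
  have F2: "F2 = 2 * N * M * fact (2 * n)"
    unfolding F2_def N_def M_def by (simp add: algebra_simps)
  have "accel_summand a (Suc n) = (-1) ^ n * Q / (N * M * X * (F2 / F1 ^ 2 * (P / (F2 / F1) ^ 2)))"
    unfolding accel_summand_def prod_one_minus_square_ratio wz_denom_diagonal[symmetric]
      P_def[symmetric] N_def[symmetric] X_def[symmetric] binom F1_def[symmetric] F2_def[symmetric]
      M Q_def[symmetric]
    by (simp only: mult.assoc diff_Suc_1)
  also have "\<dots> = 2 * (-1) ^ n * fact (2 * n) * Q / (X * P)"
    using nonzero unfolding squares unfolding F2 by (simp add: field_simps)
  finally show ?thesis
    unfolding Q_def X_def P_def N_def .
qed

lemma accel_summand_eq_wz_diagonal: "accel_summand a (Suc n) = 4 * (wz_F a n n + wz_G a n (Suc n))"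
proof -
  define N where "N = (of_nat (Suc n) :: 'a)"
  define M where "M = (of_nat (2 * n + 1) :: 'a)"
  define X where "X = N ^ 2 - a ^ 2"
  define Y where "Y = of_nat (n + n + 2) ^ 2 - a ^ 2"
  define P where "P = wz_denom a n (Suc n)"
  define c where "c = (-1) ^ n * fact (2 * n) / (2 * X * P)"
  have nonzero: "N \<noteq> 0" "X \<noteq> 0" "Y \<noteq> 0" "P \<noteq> 0"
    unfolding N_def X_def Y_def P_def
    by (simp_all add: wz_denom_nonzero square_ne del: of_nat_add of_nat_Suc)
  have denom_diag: "wz_denom a n n = X * P / Y"
    using wz_denom_Suc_left[of a n n] wz_denom_Suc_right[of a n n] nonzero(3)
    unfolding N_def X_def Y_def P_def by (simp add: field_simps)
  have fact_Suc_n: "fact (n + 1) = N * fact n" "fact (Suc n) = N * fact n"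
    unfolding N_def by (simp_all del: of_nat_Suc)
  have F: "wz_F a n n = c * (of_nat (3 * n + 2) * Y / N)"
  proof -
    have "of_nat (2 * n + n + 2) = (of_nat (3 * n + 2) :: 'a)" by simp
    then show ?thesis
      using nonzero unfolding wz_F_def denom_diag c_def fact_Suc_n mult_2[symmetric]
      by (simp add: field_simps)
  qed
  have G: "wz_G a n (Suc n) = - c * (M * X / N)"
  proof -
    have "fact (n + Suc n) = M * fact (2 * n)"
      unfolding M_def by (simp add: mult_2 del: of_nat_Suc)
    then show ?thesis
      using nonzero unfolding wz_G_def P_def[symmetric] c_def fact_Suc_n by (simp add: field_simps)
  qed
  have "accel_summand a (Suc n) = 4 * c * (10 * N ^ 2 - 3 * N - a ^ 2)"
    using nonzero unfolding accel_summand_Suc N_def[symmetric] X_def[symmetric] P_def[symmetric] c_def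
    by (simp add: field_simps)
  also have "10 * N ^ 2 - 3 * N - a ^ 2 = (of_nat (3 * n + 2) * Y - M * X) / N"
    using nonzero(1) unfolding N_def M_def X_def Y_def
    by (simp add: field_simps power2_eq_square algebra_simps)
  finally show ?thesis
    unfolding F G by (simp add: algebra_simps diff_divide_distrib)
qed
end

lemma avoids_squaresI:
  fixes a :: "'a::field_char_0"
  assumes "\<forall>k::int. k \<noteq> 0 \<longrightarrow> a \<noteq> of_int k"
  shows "avoids_squares a"
proof
  fix j :: nat
  assume "0 < j"
  then have "int j \<noteq> 0" "- int j \<noteq> 0"
    by simp_all
  then have "a \<noteq> of_int (int j)" "a \<noteq> of_int (- int j)"
    using assms by blast+
  then have "(of_nat j - a) * (of_nat j + a) \<noteq> 0"
    by (auto simp: add_eq_0_iff)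
  then show "of_nat j ^ 2 \<noteq> a ^ 2"
    by (simp add: power2_eq_square algebra_simps)
qed

lemma norm_square_diff_ge:
  fixes a :: "'a::real_normed_field"
  assumes "3 * norm a ^ 2 \<le> real j ^ 2"
  shows "2 / 3 * real j ^ 2 \<le> norm (of_nat j ^ 2 - a ^ 2)"
  using norm_triangle_ineq2[of "of_nat j ^ 2" "a ^ 2"] assms by (simp add: norm_power)

lemma norm_wz_denom_ge:
  fixes a :: "'a::real_normed_field"
  assumes "3 * norm a ^ 2 \<le> real (k + 1) ^ 2"
  shows "(2 / 3) ^ Suc n * (fact (k + Suc n) / fact k) ^ 2 \<le> norm (wz_denom a n k)"
proof -
  have "fact k * (\<Prod>i\<le>n. real (k + i + 1)) = fact (k + Suc n)"
    using fact_mult_prod_shift[of k "Suc n"] unfolding lessThan_Suc_atMost .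
  then have "fact (k + Suc n) / fact k = (\<Prod>i\<le>n. real (k + i + 1))"
    by (simp add: field_simps)
  then have "(2 / 3) ^ Suc n * (fact (k + Suc n) / fact k) ^ 2
      = (\<Prod>i\<le>n. 2 / 3) * (\<Prod>i\<le>n. real (k + i + 1)) ^ 2"
    by simp
  also have "\<dots> = (\<Prod>i\<le>n. 2 / 3 * real (k + i + 1) ^ 2)"
    by (simp only: prod.distrib prod_power_distrib)
  also have "\<dots> \<le> (\<Prod>i\<le>n. norm (of_nat (k + i + 1) ^ 2 - a ^ 2))"
  proof (rule prod_mono)
    fix i
    have "real (k + 1) ^ 2 \<le> real (k + i + 1) ^ 2" by (intro power_mono) auto
    with assms have "2 / 3 * real (k + i + 1) ^ 2 \<le> norm (of_nat (k + i + 1) ^ 2 - a ^ 2)"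
      by (intro norm_square_diff_ge) linarith
    then show "0 \<le> 2 / 3 * real (k + i + 1) ^ 2 \<and>
        2 / 3 * real (k + i + 1) ^ 2 \<le> norm (of_nat (k + i + 1) ^ 2 - a ^ 2)"
      by simp
  qed
  also have "\<dots> = norm (wz_denom a n k)"
    unfolding wz_denom_def by (rule prod_norm)
  finally show ?thesis .
qed

lemma norm_wz_G_le:
  fixes a :: "'a::real_normed_field"
  assumes "3 * norm a ^ 2 \<le> real (k + 1) ^ 2"
  shows "norm (wz_G a n k)
    \<le> (3 / 2) ^ Suc n * (fact n * fact k / fact (n + k)) / (2 * real (n + k + 1) ^ 2)"
proof -
  define R where "R = fact (k + Suc n) / (fact k :: real)"
  define N where "N = real (n + k + 1)"
  have "N > 0"
    unfolding N_def by simp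
  have R: "R = N * fact (n + k) / fact k"
    unfolding R_def N_def by (simp add: algebra_simps)
  have pos: "0 < (2 / 3) ^ Suc n * R ^ 2"
    unfolding R_def by simp
  have "norm (wz_G a n k) = fact n * fact (n + k) / (2 * fact k * norm (wz_denom a n k))"
    unfolding wz_G_def by (simp add: norm_mult norm_divide norm_power)
  also have "\<dots> \<le> fact n * fact (n + k) / (2 * fact k * ((2 / 3) ^ Suc n * R ^ 2))"
    using norm_wz_denom_ge[OF assms, of n] pos unfolding R_def[symmetric]
    by (intro divide_left_mono mult_left_mono mult_pos_pos) auto
  also have "\<dots> = (3 / 2) ^ Suc n * (fact n * fact k / fact (n + k)) / (2 * N ^ 2)"
    using \<open>N > 0\<close> unfolding R by (simp add: field_simps power_divide power2_eq_square)
  finally show ?thesis unfolding N_def .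
qed

lemma eventually_square_ge: "eventually (\<lambda>K. c \<le> real (K + 1) ^ 2) sequentially"
proof -
  have "eventually (\<lambda>K. c \<le> real K) sequentially"
    using filterlim_real_sequentially unfolding filterlim_at_top by blast
  then show ?thesis
  proof eventually_elim
    case (elim K)
    have "real (K + 1) \<le> real (K + 1) ^ 2"
      by (rule self_le_power) simp_all
    with elim show ?case by simp
  qed
qed

lemma summable_inverse_Suc_square: "summable (\<lambda>n. inverse (real (Suc n) ^ 2))"
  using summable_Suc_iff[of "\<lambda>n. inverse (real n ^ 2)"] inverse_power_summable[of 2, where 'a=real]
  by simp

lemma summable_wz_F_zero:
  fixes a :: "'a::{real_normed_field,banach}"
  shows "summable (wz_F a 0)"
proof -
  obtain K0 where K0: "\<And>k. K0 \<le> k \<Longrightarrow> 3 * norm a ^ 2 \<le> real (k + 1) ^ 2"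
    using eventually_square_ge unfolding eventually_sequentially by blast
  have "norm (wz_F a 0 k) \<le> 3 / 2 * inverse (real (Suc k) ^ 2)" if "K0 \<le> k" for k
  proof -
    have "norm (wz_G a 0 k) \<le> 3 / 2 * (fact k / fact k) / (2 * real (k + 1) ^ 2)"
      using norm_wz_G_le[OF K0[OF that], of 0] by simp
    moreover have "norm (wz_F a 0 k) = 2 * norm (wz_G a 0 k)"
      unfolding wz_F_eq_wz_G by (simp add: norm_mult norm_divide del: of_nat_Suc) (simp add: field_simps)
    ultimately show ?thesis
      by (simp add: field_simps)
  qed
  moreover have "summable (\<lambda>k. 3 / 2 * inverse (real (Suc k) ^ 2))"
    using summable_inverse_Suc_square by (rule summable_mult)
  ultimately show ?thesis
    by (blast intro: summable_comparison_test')
qed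

lemma wz_F_diagonal_tendsto_zero:
  fixes a :: "'a::real_normed_field"
  shows "(\<lambda>K. wz_F a K K) \<longlonglongrightarrow> 0"
proof (rule Lim_null_comparison)
  show "(\<lambda>K. 9 / 2 * (3 / 4 :: real) ^ K) \<longlonglongrightarrow> 0"
    by (intro tendsto_mult_right_zero LIMSEQ_power_zero) simp
  show "eventually (\<lambda>K. norm (wz_F a K K) \<le> 9 / 2 * (3 / 4) ^ K) sequentially"
    using eventually_square_ge[of "3 * norm a ^ 2"]
  proof eventually_elim
    case (elim K)
    have "norm (wz_G a K K)
        \<le> (3 / 2) ^ Suc K * (fact K * fact K / fact (K + K)) / (2 * real (K + K + 1) ^ 2)"
      by (rule norm_wz_G_le[OF elim])
    also have "\<dots> \<le> (3 / 2) ^ Suc K * (fact K * fact K / fact (K + K)) / 1"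
    proof (intro divide_left_mono)
      have "1 \<le> real (K + K + 1) ^ 2"
        by (rule one_le_power) simp
      then show "1 \<le> 2 * real (K + K + 1) ^ 2"
        by linarith
    qed simp_all
    also have "\<dots> \<le> (3 / 2) ^ Suc K * (1 / 2) ^ K"
      unfolding div_by_1 by (intro mult_left_mono fact_mult_fact_div_le) simp_all
    also have "\<dots> = 3 / 2 * (3 / 4) ^ K"
      by (simp add: power_mult_distrib[symmetric])
    finally have G: "norm (wz_G a K K) \<le> 3 / 2 * (3 / 4) ^ K" .
    have "norm (wz_F a K K) = norm (wz_G a K K) * (real (3 * K + 2) / real (K + 1))"
      unfolding wz_F_eq_wz_G by (simp add: norm_mult norm_divide del: of_nat_add of_nat_Suc)
    also have "\<dots> \<le> 3 / 2 * (3 / 4) ^ K * 3"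
      using G by (intro mult_mono) (simp_all add: field_simps)
    finally show ?case by simp
  qed
qed

lemma wz_G_tail_tendsto_zero:
  fixes a :: "'a::real_normed_field"
  shows "(\<lambda>K. \<Sum>n<K. wz_G a n (Suc K)) \<longlonglongrightarrow> 0"
proof (rule Lim_null_comparison)
  show "(\<lambda>K. 6 * inverse (real (Suc K))) \<longlonglongrightarrow> 0"
    by (intro tendsto_mult_right_zero LIMSEQ_inverse_real_of_nat)
  show "eventually (\<lambda>K. norm (\<Sum>n<K. wz_G a n (Suc K)) \<le> 6 * inverse (real (Suc K))) sequentially"
    using eventually_square_ge[of "3 * norm a ^ 2"]
  proof eventually_elim
    case (elim K)
    have "real (K + 1) ^ 2 \<le> real (Suc K + 1) ^ 2"
      by (intro power_mono) simp_all
    with elim have big: "3 * norm a ^ 2 \<le> real (Suc K + 1) ^ 2"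
      by linarith
    have G: "norm (wz_G a n (Suc K)) \<le> 3 / 2 * (3 / 4) ^ n * inverse (real (Suc K))" if "n < K" for n
    proof -
      have "real (Suc K) \<le> real (n + Suc K + 1)"
        by simp
      also have "\<dots> \<le> real (n + Suc K + 1) ^ 2"
        by (rule self_le_power) simp_all
      finally have sq: "real (Suc K) \<le> 2 * real (n + Suc K + 1) ^ 2"
        by simp
      have "norm (wz_G a n (Suc K))
          \<le> (3 / 2) ^ Suc n * (fact n * fact (Suc K) / fact (n + Suc K))
            / (2 * real (n + Suc K + 1) ^ 2)"
        by (rule norm_wz_G_le[OF big])
      also have "\<dots> \<le> (3 / 2) ^ Suc n * (1 / 2) ^ n / (2 * real (n + Suc K + 1) ^ 2)"
        using that by (intro divide_right_mono mult_left_mono fact_mult_fact_div_le) simp_all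
      also have "\<dots> \<le> (3 / 2) ^ Suc n * (1 / 2) ^ n / real (Suc K)"
        using sq by (intro divide_left_mono) simp_all
      also have "\<dots> = 3 / 2 * (3 / 4) ^ n * inverse (real (Suc K))"
        by (simp add: power_mult_distrib[symmetric] field_simps)
      finally show ?thesis .
    qed
    have "norm (\<Sum>n<K. wz_G a n (Suc K)) \<le> (\<Sum>n<K. 3 / 2 * (3 / 4) ^ n * inverse (real (Suc K)))"
      using G by (intro sum_norm_le) simp
    also have "\<dots> = 3 / 2 * inverse (real (Suc K)) * (\<Sum>n<K. (3 / 4 :: real) ^ n)"
      by (simp add: sum_distrib_left algebra_simps)
    also have "\<dots> \<le> 3 / 2 * inverse (real (Suc K)) * 4"
      by (intro mult_left_mono) (simp_all add: sum_gp_strict)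
    finally show ?case by simp
  qed
qed

lemma accel_series:
  fixes a :: "'a::{real_normed_field,banach}"
  assumes "avoids_squares a"
  shows "summable (\<lambda>m. (-1) ^ m / (of_nat (Suc m) ^ 2 - a ^ 2))"
    and "(\<lambda>m. accel_summand a (Suc m)) sums (4 * (\<Sum>m. (-1) ^ m / (of_nat (Suc m) ^ 2 - a ^ 2)))"
proof -
  interpret avoids_squares a by (fact assms)
  have F0: "wz_F a 0 = (\<lambda>m. (-1) ^ m / (of_nat (Suc m) ^ 2 - a ^ 2))"
    by (simp add: fun_eq_iff wz_F_zero)
  show "summable (\<lambda>m. (-1) ^ m / (of_nat (Suc m) ^ 2 - a ^ 2))"
    using summable_wz_F_zero[of a] unfolding F0 .
  have "(\<lambda>n. wz_F a n n + wz_G a n (Suc n)) sums (\<Sum>k. wz_F a 0 k)"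
    using wz_pair summable_wz_F_zero wz_F_diagonal_tendsto_zero wz_G_tail_tendsto_zero
    by (rule wz_sums)
  from sums_mult[OF this, of 4]
  show "(\<lambda>m. accel_summand a (Suc m)) sums (4 * (\<Sum>m. (-1) ^ m / (of_nat (Suc m) ^ 2 - a ^ 2)))"
    unfolding F0 accel_summand_eq_wz_diagonal .
qed

lemma accel_summand_zero:
  "accel_summand 0 n
     = (-1) ^ (n - 1) * (10 * of_nat n - 3) / (of_nat n ^ 2 * (2 * of_nat n - 1) * of_nat ((2 * n) choose n))"
proof (cases "n = 0")
  case False
  define N where "N = (of_nat n :: 'a)"
  define M where "M = 2 * N - 1"
  define C where "C = (of_nat ((2 * n) choose n) :: 'a)"
  have "M = of_nat (2 * n - 1)"
    using False unfolding M_def N_def by simp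
  then have "M \<noteq> 0"
    using False by (simp del: of_nat_diff)
  moreover have "N \<noteq> 0" "C \<noteq> 0"
    using False unfolding N_def C_def by simp_all
  ultimately show ?thesis
    unfolding accel_summand_def N_def[symmetric] C_def[symmetric] M_def[symmetric]
    by (simp add: field_simps power2_eq_square)
qed (simp add: accel_summand_def)

lemma alternating_inverse_squares_sums:
  "(\<lambda>m. (-1) ^ m / real (Suc m) ^ 2) sums ((\<Sum>m. 1 / real (Suc m) ^ 2) / 2)"
proof -
  define b where "b = (\<lambda>m. 1 / real (Suc m) ^ 2)"
  define h where "h = (\<lambda>m. if odd m then b m else 0)"
  have b: "b sums (\<Sum>m. b m)"
    using summable_inverse_Suc_square unfolding b_def by (simp add: divide_inverse summable_sums)
  have "(\<lambda>k. h (2 * k + 1)) = (\<lambda>k. 1 / 4 * b k)"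
    by (simp add: fun_eq_iff h_def b_def power2_eq_square field_simps)
  then have "(\<lambda>k. h (2 * k + 1)) sums (1 / 4 * (\<Sum>m. b m))"
    using sums_mult[OF b, of "1 / 4"] by simp
  moreover have "strict_mono (\<lambda>k::nat. 2 * k + 1)"
    by (rule strict_monoI) simp
  moreover have "h n = 0" if "n \<notin> range (\<lambda>k::nat. 2 * k + 1)" for n
    using that oddE[of n] unfolding h_def by (metis rangeI)
  ultimately have "h sums (1 / 4 * (\<Sum>m. b m))"
    using sums_mono_reindex[of "\<lambda>k::nat. 2 * k + 1" h] by blast
  from sums_diff[OF b sums_mult[OF this, of 2]]
  have "(\<lambda>m. b m - 2 * h m) sums ((\<Sum>m. b m) / 2)"
    by simp
  moreover have "(\<lambda>m. b m - 2 * h m) = (\<lambda>m. (-1) ^ m / real (Suc m) ^ 2)"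
    by (simp add: fun_eq_iff h_def b_def)
  ultimately show ?thesis
    unfolding b_def by simp
qed

theorem corollary4:
  fixes a :: complex
  assumes "\<forall>k::int. k \<noteq> 0 \<longrightarrow> a \<noteq> of_int k"
  shows "summable (\<lambda>m. let n = Suc m in (-1) ^ (n - 1) / (of_nat n ^ 2 - a ^ 2))
       \<and> summable (\<lambda>m. let n = Suc m in
            (-1) ^ (n - 1) * (10 * of_nat n ^ 2 - 3 * of_nat n - a ^ 2) /
            (of_nat n * (2 * of_nat n - 1) * (of_nat n ^ 2 - a ^ 2) * of_nat ((2 * n) choose n)
             * (\<Prod>j = 1..n. (1 - a ^ 2 / (of_nat (n + j)) ^ 2))))
       \<and> (\<Sum>m. let n = Suc m in (-1) ^ (n - 1) / (of_nat n ^ 2 - a ^ 2))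
         = 1 / 4 * (\<Sum>m. let n = Suc m in
            (-1) ^ (n - 1) * (10 * of_nat n ^ 2 - 3 * of_nat n - a ^ 2) /
            (of_nat n * (2 * of_nat n - 1) * (of_nat n ^ 2 - a ^ 2) * of_nat ((2 * n) choose n)
             * (\<Prod>j = 1..n. (1 - a ^ 2 / (of_nat (n + j)) ^ 2))))
       \<and> summable (\<lambda>m. let n = Suc m in
            (-1) ^ (n - 1) * (10 * real n - 3) / (real n ^ 2 * (2 * real n - 1) * real ((2 * n) choose n)))
       \<and> (\<Sum>m. 1 / real (Suc m) ^ 2)
         = 1 / 2 * (\<Sum>m. let n = Suc m in
            (-1) ^ (n - 1) * (10 * real n - 3) / (real n ^ 2 * (2 * real n - 1) * real ((2 * n) choose n)))"
proof -
  define \<zeta>2 where "\<zeta>2 = (\<Sum>m. 1 / real (Suc m) ^ 2)"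
  have "avoids_squares a" "avoids_squares (0 :: real)"
    using assms by (simp_all add: avoids_squaresI)
  have alternating: "(\<Sum>m. (-1) ^ m / (of_nat (Suc m) ^ 2 - 0 ^ 2 :: real)) = \<zeta>2 / 2"
    using sums_unique[OF alternating_inverse_squares_sums] unfolding \<zeta>2_def by simp
  have "(\<lambda>m. accel_summand (0 :: real) (Suc m)) sums (4 * (\<zeta>2 / 2))"
    using accel_series(2)[OF \<open>avoids_squares 0\<close>] unfolding alternating .
  then show ?thesis
    using accel_series[OF \<open>avoids_squares a\<close>]
    unfolding Let_def accel_summand_def[symmetric] accel_summand_zero[symmetric] \<zeta>2_def[symmetric]
    by (simp add: sums_iff)
qed

end
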